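(* Let $m\ge1$ and let $\phi$ be the automorphism of the free group $F_{2m}$ with basis $A_1,\dots,A_m,B_1,\dots,B_m$ defined by $\phi(A_i)=(A_1\cdots A_{i-1})A_i(A_1\cdots A_{i-1})^{-1}$ for $1\le i\le m$ and $\phi(B_j)=A_1A_2\cdots A_m(B_1B_2\cdots B_j)\overline{A}_{j-1}\overline{A}_{j-2}\cdots\overline{A}_1$ for $1\le j\le m$ (so $\phi(A_1)=A_1$ and $\phi(B_1)=A_1\cdots A_mB_1$). Then for all integers $n\ge1$ and $1\le k\le m$, $\phi^n(B_k)=A_1^n\cdots A_m^n\,u_{k,n}\,B_k\,\overline{A}_{k-1}^{\,n}\cdots\overline{A}_1^{\,n}$ in $F_{2m}$, where $u_{k,n}$ is a positive word.
   Context: A bar denotes the inverse of an element: $\overline{A}_i=A_i^{-1}$. A positive word is a word in the letters $A_1,\dots,A_m,B_1,\dots,B_m$ containing no inverse letters (the empty word is allowed). *)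

theory Defs
  imports Main
begin

text \<open>Generators of the free group F_{2m}: A i and B i (with 1 \<le> i \<le> m).
  A letter is a generator together with a flag; flag True means the inverse letter.
  Elements of the free group are represented by words (lists of letters);
  two words represent the same element iff they are equivalent under the
  equivalence closure of cancelling an adjacent pair x x^{-1}.\<close>

datatype gen = A nat | B nat

type_synonym letter = "gen \<times> bool"

inductive cancel1 :: "letter list \<Rightarrow> letter list \<Rightarrow> bool" where
  "cancel1 (xs @ [(g, b), (g, \<not> b)] @ ys) (xs @ ys)"

definition fg_eq :: "letter list \<Rightarrow> letter list \<Rightarrow> bool" where
  "fg_eq u v = equivclp cancel1 u v"

definition inv_word :: "letter list \<Rightarrow> letter list" where
  "inv_word w = rev (map (\<lambda>(g, b). (g, \<not> b)) w)"

definition Apre :: "nat \<Rightarrow> letter list" where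
  "Apre i = map (\<lambda>l. (A l, False)) [1..<i]"

definition Bpre :: "nat \<Rightarrow> letter list" where
  "Bpre j = map (\<lambda>l. (B l, False)) [1..<Suc j]"

fun phi_gen :: "nat \<Rightarrow> gen \<Rightarrow> letter list" where
  "phi_gen m (A i) = Apre i @ [(A i, False)] @ inv_word (Apre i)"
| "phi_gen m (B j) = Apre (Suc m) @ Bpre j @ inv_word (Apre j)"

definition phi_letter :: "nat \<Rightarrow> letter \<Rightarrow> letter list" where
  "phi_letter m x = (if snd x then inv_word (phi_gen m (fst x)) else phi_gen m (fst x))"

definition phi_word :: "nat \<Rightarrow> letter list \<Rightarrow> letter list" where
  "phi_word m w = concat (map (phi_letter m) w)"

definition positive_word :: "nat \<Rightarrow> letter list \<Rightarrow> bool" where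
  "positive_word m u \<longleftrightarrow>
     (\<forall>x \<in> set u. \<not> snd x \<and> (\<exists>i \<in> {1..m}. fst x = A i \<or> fst x = B i))"

end

theory Submission
  imports Defs
begin

text \<open>Call a word B_j A_j^a A_(j+1)^a ... A_m^a (1 <= j <= m, a >= 0) a block, and a product
  of blocks a block word; block words are positive. With D = A_1 ... A_m and P_j = A_1 ... A_(j-1),
  one has phi(A_j^a ... A_m^a) = P_j A_j^(a+1) ... A_m^(a+1) D^-1, hence the image of a block is
  D (B_1 ... B_(j-1)) (B_j A_j^(a+1) ... A_m^(a+1)) D^-1, and phi maps every block word w to
  D w' D^-1 with w' again a block word. Applying phi to A_1^n ... A_m^n u B_k (A_1^n ... A_(k-1)^n)^-1
  with u a block word, all the conjugating factors D and P_k cancel, leaving the same shape for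
  n + 1 with the block word w' B_1 ... B_(k-1) in place of u.\<close>

lemma equivclp_map:
  assumes "\<And>x y. r x y \<Longrightarrow> equivclp r (f x) (f y)" and "equivclp r u v"
  shows "equivclp r (f u) (f v)"
  using assms(2)
proof (induction rule: equivclp_induct)
  case base
  show ?case by simp
next
  case (step y z)
  then show ?case using assms(1) by (metis equivclp_sym equivclp_trans)
qed

lemma fg_eq_refl [simp]: "fg_eq u u"
  by (simp add: fg_eq_def)

lemma fg_eq_sym: "fg_eq u v \<Longrightarrow> fg_eq v u"
  unfolding fg_eq_def by (rule equivclp_sym)

lemma fg_eq_trans [trans]: "fg_eq u v \<Longrightarrow> fg_eq v w \<Longrightarrow> fg_eq u w"
  unfolding fg_eq_def by (rule equivclp_trans)

lemma cancel1_append: "cancel1 u v \<Longrightarrow> cancel1 (x @ u @ y) (x @ v @ y)"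
proof (induction rule: cancel1.induct)
  case (1 xs g b ys)
  have "cancel1 ((x @ xs) @ [(g, b), (g, \<not> b)] @ (ys @ y)) ((x @ xs) @ (ys @ y))"
    by (rule cancel1.intros)
  then show ?case by simp
qed

lemma fg_eq_append: "fg_eq u u' \<Longrightarrow> fg_eq v v' \<Longrightarrow> fg_eq (u @ v) (u' @ v')"
proof -
  have frame: "fg_eq (x @ w @ y) (x @ w' @ y)" if "fg_eq w w'" for x w w' y
    using that unfolding fg_eq_def
    by (rule equivclp_map[where f = "\<lambda>w. x @ w @ y", rotated]) (auto intro: cancel1_append)
  assume "fg_eq u u'" "fg_eq v v'"
  then show ?thesis
    using frame[of u u' "[]" v] frame[of v v' u' "[]"] by (auto intro: fg_eq_trans)
qed

lemma inv_word_Nil [simp]: "inv_word [] = []"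
  by (simp add: inv_word_def)

lemma inv_word_append [simp]: "inv_word (u @ v) = inv_word v @ inv_word u"
  by (simp add: inv_word_def)

lemma inv_word_Cons: "inv_word ((g, b) # w) = inv_word w @ [(g, \<not> b)]"
  by (simp add: inv_word_def)

lemma inv_word_inv_word [simp]: "inv_word (inv_word w) = w"
  by (induction w) (auto simp: inv_word_def)

lemma fg_eq_right_inverse: "fg_eq (u @ w @ inv_word w @ v) (u @ v)"
proof (induction w arbitrary: u v)
  case Nil
  show ?case by simp
next
  case (Cons x w)
  obtain g b where x: "x = (g, b)" by (cases x)
  have "u @ (x # w) @ inv_word (x # w) @ v = (u @ [x]) @ w @ inv_word w @ ([(g, \<not> b)] @ v)"
    by (simp add: x inv_word_Cons)
  also have "fg_eq \<dots> (u @ [(g, b), (g, \<not> b)] @ v)"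
    using Cons.IH[of "u @ [x]" "[(g, \<not> b)] @ v"] by (simp add: x)
  also have "fg_eq \<dots> (u @ v)"
    unfolding fg_eq_def by (rule r_into_equivclp) (rule cancel1.intros)
  finally show ?case .
qed

lemma fg_eq_left_inverse: "fg_eq (u @ inv_word w @ w @ v) (u @ v)"
  using fg_eq_right_inverse[of u "inv_word w" v] by simp

lemma cancel1_inv_word: "cancel1 u v \<Longrightarrow> cancel1 (inv_word u) (inv_word v)"
proof (induction rule: cancel1.induct)
  case (1 xs g b ys)
  have "cancel1 (inv_word ys @ [(g, b), (g, \<not> b)] @ inv_word xs) (inv_word ys @ inv_word xs)"
    by (rule cancel1.intros)
  then show ?case by (simp add: inv_word_def)
qed

lemma fg_eq_inv_word: "fg_eq u v \<Longrightarrow> fg_eq (inv_word u) (inv_word v)"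
  unfolding fg_eq_def
  by (rule equivclp_map[where f = inv_word, rotated]) (auto intro: cancel1_inv_word)

lemma fg_eq_conj_power:
  "fg_eq (concat (replicate a (p @ x @ inv_word p))) (p @ concat (replicate a x) @ inv_word p)"
proof (induction a)
  case 0
  show ?case using fg_eq_sym[OF fg_eq_right_inverse[of "[]" p "[]"]] by simp
next
  case (Suc a)
  have "concat (replicate (Suc a) (p @ x @ inv_word p))
      = (p @ x @ inv_word p) @ concat (replicate a (p @ x @ inv_word p))"
    by simp
  also have "fg_eq \<dots> ((p @ x @ inv_word p) @ p @ concat (replicate a x) @ inv_word p)"
    using Suc.IH by (intro fg_eq_append) simp_all
  also have "\<dots> = (p @ x) @ inv_word p @ p @ concat (replicate a x) @ inv_word p"
    by simp
  also have "fg_eq \<dots> ((p @ x) @ concat (replicate a x) @ inv_word p)"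
    by (rule fg_eq_left_inverse)
  finally show ?case by simp
qed

lemma phi_word_Nil [simp]: "phi_word m [] = []"
  by (simp add: phi_word_def)

lemma phi_word_append [simp]: "phi_word m (u @ v) = phi_word m u @ phi_word m v"
  by (simp add: phi_word_def)

lemma phi_word_Cons [simp]: "phi_word m (x # w) = phi_letter m x @ phi_word m w"
  by (simp add: phi_word_def)

lemma phi_letter_positive [simp]: "phi_letter m (g, False) = phi_gen m g"
  by (simp add: phi_letter_def)

lemma phi_letter_inverse: "phi_letter m (g, \<not> b) = inv_word (phi_letter m (g, b))"
  by (simp add: phi_letter_def)

lemma phi_word_inv_word: "phi_word m (inv_word w) = inv_word (phi_word m w)"
proof (induction w)
  case Nil
  show ?case by simp
next
  case (Cons x w)
  then show ?case by (cases x) (simp add: inv_word_Cons phi_letter_inverse)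
qed

lemma phi_word_replicate: "phi_word m (replicate a x) = concat (replicate a (phi_letter m x))"
  by (induction a) auto

lemma fg_eq_phi_word:
  assumes "fg_eq u v"
  shows "fg_eq (phi_word m u) (phi_word m v)"
proof -
  have "fg_eq (phi_word m u) (phi_word m v)" if "cancel1 u v" for u v
    using that
  proof (induction rule: cancel1.induct)
    case (1 xs g b ys)
    have "phi_word m (xs @ [(g, b), (g, \<not> b)] @ ys)
        = phi_word m xs @ phi_letter m (g, b) @ inv_word (phi_letter m (g, b)) @ phi_word m ys"
      by (simp add: phi_letter_inverse)
    also have "fg_eq \<dots> (phi_word m xs @ phi_word m ys)"
      by (rule fg_eq_right_inverse)
    finally show ?case by simp
  qed
  then show ?thesis
    using assms unfolding fg_eq_def by (rule equivclp_map)
qed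

definition A_powers :: "nat \<Rightarrow> nat \<Rightarrow> nat \<Rightarrow> letter list" where
  "A_powers a i j = concat (map (\<lambda>l. replicate a (A l, False)) [i..<j])"

lemma A_powers_0 [simp]: "A_powers 0 i j = []"
  by (simp add: A_powers_def)

lemma A_powers_empty [simp]: "A_powers a i i = []"
  by (simp add: A_powers_def)

lemma A_powers_Suc: "i \<le> j \<Longrightarrow> A_powers a i (Suc j) = A_powers a i j @ replicate a (A j, False)"
  by (simp add: A_powers_def)

lemma inv_word_A_powers:
  "inv_word (A_powers a i j) = concat (map (\<lambda>l. replicate a (A l, True)) (rev [i..<j]))"
  by (simp add: A_powers_def inv_word_def rev_concat rev_map map_concat comp_def)

lemma Apre_Suc: "1 \<le> j \<Longrightarrow> Apre (Suc j) = Apre j @ [(A j, False)]"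
  by (simp add: Apre_def)

lemma Apre_Suc_0 [simp]: "Apre (Suc 0) = []"
  by (simp add: Apre_def)

lemma phi_A_powers:
  assumes "1 \<le> i" and "i \<le> j"
  shows "fg_eq (phi_word m (A_powers a i j)) (Apre i @ A_powers (Suc a) i j @ inv_word (Apre j))"
  using assms(2)
proof (induction j rule: dec_induct)
  case base
  show ?case using fg_eq_sym[OF fg_eq_right_inverse[of "[]" "Apre i" "[]"]] by simp
next
  case (step j)
  let ?x = "(A j, False)" and ?P = "Apre j"
  have "phi_word m (A_powers a i (Suc j))
      = phi_word m (A_powers a i j) @ concat (replicate a (?P @ [?x] @ inv_word ?P))"
    using step.hyps by (simp add: A_powers_Suc phi_word_replicate)
  also have "fg_eq \<dots> ((Apre i @ A_powers (Suc a) i j @ inv_word ?P) @ ?P @ replicate a ?x @ inv_word ?P)"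
    using step.IH fg_eq_conj_power[of a ?P "[?x]"] by (intro fg_eq_append) simp_all
  also have "\<dots> = (Apre i @ A_powers (Suc a) i j) @ inv_word ?P @ ?P @ replicate a ?x @ inv_word ?P"
    by simp
  also have "fg_eq \<dots> ((Apre i @ A_powers (Suc a) i j) @ replicate a ?x @ inv_word ?P)"
    by (rule fg_eq_left_inverse)
  also have "fg_eq \<dots> ((Apre i @ A_powers (Suc a) i j @ replicate a ?x) @ [?x] @ inv_word [?x] @ inv_word ?P)"
    using fg_eq_right_inverse[of "Apre i @ A_powers (Suc a) i j @ replicate a ?x" "[?x]" "inv_word ?P"]
    by (simp add: fg_eq_sym)
  also have "\<dots> = Apre i @ A_powers (Suc a) i (Suc j) @ inv_word (Apre (Suc j))"
    using assms(1) step.hyps by (simp add: A_powers_Suc Apre_Suc replicate_append_same)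
  finally show ?case .
qed

inductive block_word :: "nat \<Rightarrow> letter list \<Rightarrow> bool" for m where
  Nil: "block_word m []"
| Cons_block: "\<lbrakk>1 \<le> j; j \<le> m; block_word m w\<rbrakk> \<Longrightarrow> block_word m ((B j, False) # A_powers a j (Suc m) @ w)"

lemma block_word_append: "block_word m u \<Longrightarrow> block_word m v \<Longrightarrow> block_word m (u @ v)"
  by (induction rule: block_word.induct) (auto intro: block_word.intros)

lemma block_word_Bpre: "j \<le> m \<Longrightarrow> block_word m (Bpre j)"
proof (induction j)
  case 0
  show ?case by (simp add: Bpre_def block_word.Nil)
next
  case (Suc j)
  have "block_word m [(B (Suc j), False)]"
    using block_word.Cons_block[OF _ Suc.prems block_word.Nil, of 0] by simp
  then show ?case
    using Suc by (simp add: Bpre_def block_word_append)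
qed

lemma block_word_positive: "block_word m w \<Longrightarrow> positive_word m w"
  by (induction rule: block_word.induct) (auto simp: positive_word_def A_powers_def)

lemma phi_block_word:
  assumes "block_word m w"
  shows "\<exists>w'. block_word m w' \<and> fg_eq (phi_word m w) (Apre (Suc m) @ w' @ inv_word (Apre (Suc m)))"
  using assms
proof (induction rule: block_word.induct)
  case Nil
  show ?case
    using block_word.Nil fg_eq_sym[OF fg_eq_right_inverse[of "[]" "Apre (Suc m)" "[]"]]
    by (intro exI[of _ "[]"]) simp
next
  case (Cons_block j w a)
  let ?D = "Apre (Suc m)" and ?P = "Apre j" and ?R = "A_powers (Suc a) j (Suc m)"
  obtain w' where w': "block_word m w'" and phi_w: "fg_eq (phi_word m w) (?D @ w' @ inv_word ?D)"
    using Cons_block.IH by blast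
  have "phi_word m ((B j, False) # A_powers a j (Suc m) @ w)
      = (?D @ Bpre j @ inv_word ?P) @ phi_word m (A_powers a j (Suc m)) @ phi_word m w"
    by simp
  also have "fg_eq \<dots> ((?D @ Bpre j @ inv_word ?P) @ (?P @ ?R @ inv_word ?D) @ ?D @ w' @ inv_word ?D)"
    using Cons_block.hyps phi_w by (intro fg_eq_append phi_A_powers fg_eq_refl) simp_all
  also have "\<dots> = (?D @ Bpre j) @ inv_word ?P @ ?P @ ?R @ inv_word ?D @ ?D @ w' @ inv_word ?D"
    by simp
  also have "fg_eq \<dots> ((?D @ Bpre j) @ ?R @ inv_word ?D @ ?D @ w' @ inv_word ?D)"
    by (rule fg_eq_left_inverse)
  also have "\<dots> = (?D @ Bpre j @ ?R) @ inv_word ?D @ ?D @ w' @ inv_word ?D"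
    by simp
  also have "fg_eq \<dots> ((?D @ Bpre j @ ?R) @ w' @ inv_word ?D)"
    by (rule fg_eq_left_inverse)
  finally have "fg_eq (phi_word m ((B j, False) # A_powers a j (Suc m) @ w))
      (?D @ (Bpre j @ ?R @ w') @ inv_word ?D)"
    by simp
  moreover have "block_word m (Bpre j @ ?R @ w')"
  proof -
    have "Bpre j @ ?R @ w' = Bpre (j - 1) @ (B j, False) # ?R @ w'"
      using Cons_block.hyps by (cases j) (simp_all add: Bpre_def)
    then show ?thesis
      using Cons_block.hyps w' by (simp add: block_word_append block_word_Bpre block_word.Cons_block)
  qed
  ultimately show ?case by blast
qed

definition framed_B :: "nat \<Rightarrow> nat \<Rightarrow> nat \<Rightarrow> letter list \<Rightarrow> letter list" where
  "framed_B m k n u = A_powers n 1 (Suc m) @ u @ [(B k, False)] @ inv_word (A_powers n 1 k)"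

lemma phi_framed_B:
  assumes "1 \<le> k" and "k \<le> m" and "block_word m u"
  shows "\<exists>u'. block_word m u' \<and> fg_eq (phi_word m (framed_B m k n u)) (framed_B m k (Suc n) u')"
proof -
  let ?D = "Apre (Suc m)" and ?P = "Apre k"
    and ?R = "A_powers (Suc n) 1 (Suc m)" and ?S = "A_powers (Suc n) 1 k"
  obtain u' where u': "block_word m u'" and phi_u: "fg_eq (phi_word m u) (?D @ u' @ inv_word ?D)"
    using phi_block_word[OF assms(3)] by blast
  have "phi_word m (framed_B m k n u)
      = phi_word m (A_powers n 1 (Suc m)) @ phi_word m u @ (?D @ Bpre k @ inv_word ?P)
        @ inv_word (phi_word m (A_powers n 1 k))"
    by (simp add: framed_B_def phi_word_inv_word)
  also have "fg_eq \<dots> ((?R @ inv_word ?D) @ (?D @ u' @ inv_word ?D) @ (?D @ Bpre k @ inv_word ?P)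
        @ inv_word (?S @ inv_word ?P))"
    using phi_A_powers[of 1 "Suc m" m n] phi_A_powers[of 1 k m n] assms(1) phi_u
    by (intro fg_eq_append fg_eq_inv_word fg_eq_refl) simp_all
  also have "\<dots> = ?R @ inv_word ?D @ ?D @ u' @ inv_word ?D @ ?D @ Bpre k @ inv_word ?P @ ?P @ inv_word ?S"
    by simp
  also have "fg_eq \<dots> (?R @ u' @ inv_word ?D @ ?D @ Bpre k @ inv_word ?P @ ?P @ inv_word ?S)"
    by (rule fg_eq_left_inverse)
  also have "\<dots> = (?R @ u') @ inv_word ?D @ ?D @ Bpre k @ inv_word ?P @ ?P @ inv_word ?S"
    by simp
  also have "fg_eq \<dots> ((?R @ u') @ Bpre k @ inv_word ?P @ ?P @ inv_word ?S)"
    by (rule fg_eq_left_inverse)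
  also have "\<dots> = (?R @ u' @ Bpre k) @ inv_word ?P @ ?P @ inv_word ?S"
    by simp
  also have "fg_eq \<dots> ((?R @ u' @ Bpre k) @ inv_word ?S)"
    by (rule fg_eq_left_inverse)
  also have "\<dots> = framed_B m k (Suc n) (u' @ Bpre (k - 1))"
    using assms(1) by (cases k) (simp_all add: framed_B_def Bpre_def)
  finally show ?thesis
    using assms(2) u' by (intro exI[of _ "u' @ Bpre (k - 1)"]) (simp add: block_word_append block_word_Bpre)
qed

lemma phi_power_B:
  assumes "1 \<le> k" and "k \<le> m"
  shows "\<exists>u. block_word m u \<and> fg_eq ((phi_word m ^^ n) [(B k, False)]) (framed_B m k n u)"
proof (induction n)
  case 0
  show ?case
    using block_word.Nil by (intro exI[of _ "[]"]) (simp add: framed_B_def)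
next
  case (Suc n)
  then obtain u where u: "block_word m u"
    and IH: "fg_eq ((phi_word m ^^ n) [(B k, False)]) (framed_B m k n u)"
    by blast
  obtain u' where u': "block_word m u'"
    and phi_framed: "fg_eq (phi_word m (framed_B m k n u)) (framed_B m k (Suc n) u')"
    using phi_framed_B[OF assms u] by blast
  have "fg_eq ((phi_word m ^^ Suc n) [(B k, False)]) (framed_B m k (Suc n) u')"
    using fg_eq_trans[OF fg_eq_phi_word[OF IH] phi_framed] by simp
  then show ?case
    using u' by blast
qed

theorem lemma7p7:
  fixes m n k :: nat
  assumes "1 \<le> m" and "1 \<le> n" and "1 \<le> k" and "k \<le> m"
  shows "\<exists>u. positive_word m u \<and>
     fg_eq ((phi_word m ^^ n) [(B k, False)])
       (concat (map (\<lambda>l. replicate n (A l, False)) [1..<Suc m]) @ u @ [(B k, False)]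
        @ concat (map (\<lambda>l. replicate n (A l, True)) (rev [1..<k])))"
proof -
  \<comment> \<open>The claim also holds for n = 0 (with u empty).\<close>
  obtain u where "block_word m u" and "fg_eq ((phi_word m ^^ n) [(B k, False)]) (framed_B m k n u)"
    using phi_power_B[OF assms(3,4)] by blast
  moreover have "framed_B m k n u = concat (map (\<lambda>l. replicate n (A l, False)) [1..<Suc m])
      @ u @ [(B k, False)] @ concat (map (\<lambda>l. replicate n (A l, True)) (rev [1..<k]))"
    unfolding framed_B_def inv_word_A_powers by (simp only: A_powers_def)
  ultimately show ?thesis
    using block_word_positive by metis
qed

end
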